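(* Let $n\ge 3$ and let $N$ be a nontrivial normal subgroup of $B_n$ with $N\cap B_{n-1}=\{1\}$. If the restriction of the Dehornoy ordering to $N$ is discrete (i.e. $N$ has a least positive element), then that least positive element lies in $C(n)$, the centralizer of $B_{n-1}$ in $B_n$.
   Context: $B_n$ is the Artin braid group with generators $\sigma_1,\dots,\sigma_{n-1}$; $B_{m}\subset B_n$ for $m\le n$ via $\sigma_i\mapsto\sigma_i$. A word in the generators is $i$-positive (resp. $i$-negative) if it contains only $\sigma_1,\dots,\sigma_i$ and their inverses, $\sigma_i$ occurs, and every occurrence of $\sigma_i$ has positive (resp. negative) exponent; a braid is $i$-positive if some representative word is. The Dehornoy ordering is the left-invariant total order on $B_n$ whose positive cone consists of all braids that are $i$-positive for some $i$. For $r\ge 2$, $C(r)$ denotes the centralizer of $B_{r-1}$ in $B_r$. *)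

theory Defs
  imports "HOL-Algebra.Coset"
begin

text \<open>Braid words: a letter (i, True) is sigma_i, (i, False) is sigma_i inverse (i \<ge> 1).\<close>
type_synonym bword = "(nat \<times> bool) list"

definition gens_in :: "nat \<Rightarrow> bword \<Rightarrow> bool" where
  "gens_in n w \<longleftrightarrow> (\<forall>(i, e) \<in> set w. 1 \<le> i \<and> i < n)"

inductive braid_step :: "bword \<Rightarrow> bword \<Rightarrow> bool" where
  free: "braid_step (u @ [(i, e), (i, \<not> e)] @ v) (u @ v)"
| comm: "i + 2 \<le> j \<or> j + 2 \<le> i \<Longrightarrow>
         braid_step (u @ [(i, e), (j, f)] @ v) (u @ [(j, f), (i, e)] @ v)"
| braid: "i = j + 1 \<or> j = i + 1 \<Longrightarrow>
         braid_step (u @ [(i, True), (j, True), (i, True)] @ v) (u @ [(j, True), (i, True), (j, True)] @ v)"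

definition braid_move :: "nat \<Rightarrow> bword \<Rightarrow> bword \<Rightarrow> bool" where
  "braid_move n u w \<longleftrightarrow> gens_in n u \<and> gens_in n w \<and> (braid_step u w \<or> braid_step w u)"

definition braid_rel :: "nat \<Rightarrow> (bword \<times> bword) set" where
  "braid_rel n = {(u, w). gens_in n u \<and> (braid_move n)\<^sup>*\<^sup>* u w}"

definition braid_cls :: "nat \<Rightarrow> bword \<Rightarrow> bword set" where
  "braid_cls n w = braid_rel n `` {w}"

definition braid_group :: "nat \<Rightarrow> bword set monoid" where
  "braid_group n = \<lparr> carrier = {w. gens_in n w} // braid_rel n,
     mult = (\<lambda>X Y. \<Union>x\<in>X. \<Union>y\<in>Y. braid_cls n (x @ y)),
     one = braid_cls n [] \<rparr>"

definition sub_braid :: "nat \<Rightarrow> nat \<Rightarrow> bword set set" where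
  "sub_braid n m = {braid_cls n w | w. gens_in m w}"

definition i_positive :: "nat \<Rightarrow> bword \<Rightarrow> bool" where
  "i_positive i w \<longleftrightarrow> gens_in (i + 1) w \<and> (i, True) \<in> set w \<and> (i, False) \<notin> set w"

definition dehornoy_pos :: "nat \<Rightarrow> bword set \<Rightarrow> bool" where
  "dehornoy_pos n x \<longleftrightarrow> x \<in> carrier (braid_group n) \<and> (\<exists>w\<in>x. \<exists>i\<ge>1. i_positive i w)"

definition dehornoy_less :: "nat \<Rightarrow> bword set \<Rightarrow> bword set \<Rightarrow> bool" where
  "dehornoy_less n x y \<longleftrightarrow> dehornoy_pos n (inv\<^bsub>braid_group n\<^esub> x \<otimes>\<^bsub>braid_group n\<^esub> y)"

definition dehornoy_le :: "nat \<Rightarrow> bword set \<Rightarrow> bword set \<Rightarrow> bool" where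
  "dehornoy_le n x y \<longleftrightarrow> x = y \<or> dehornoy_less n x y"

definition C_cent :: "nat \<Rightarrow> bword set set" where
  "C_cent r = {x \<in> carrier (braid_group r). \<forall>y \<in> sub_braid r (r - 1).
      x \<otimes>\<^bsub>braid_group r\<^esub> y = y \<otimes>\<^bsub>braid_group r\<^esub> x}"

end

theory Submission
  imports Defs
begin

text \<open>Larue's proof of Property A: letting braids act on the free group by Artin's representation,
  an \<open>i\<close>-positive word sends \<open>x\<^sub>i\<^sub>+\<^sub>1\<close> to a freely reduced word ending in \<open>x\<^sub>i\<^sub>+\<^sub>1\<inverse>\<close>, so the
  trivial braid is not positive and the positive braids form a cone. As \<open>N\<close> meets \<open>B\<^sub>n\<^sub>-\<^sub>1\<close>
  trivially, every positive element of \<open>N\<close> is \<open>(n-1)\<close>-positive, and \<open>(n-1)\<close>-positivity is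
  preserved by conjugation with \<open>y \<in> B\<^sub>n\<^sub>-\<^sub>1\<close>. So if \<open>p\<close> is least positive in \<open>N\<close>, then
  \<open>p \<le> y p y\<inverse>\<close> and \<open>p \<le> y\<inverse> p y\<close>; conjugating the second inequality by \<open>y\<close> (inside \<open>N\<close>)
  gives \<open>y p y\<inverse> \<le> p\<close>, hence \<open>y p y\<inverse> = p\<close>.\<close>

definition letter_inv :: "nat \<times> bool \<Rightarrow> nat \<times> bool" where
  "letter_inv c = (fst c, \<not> snd c)"

definition word_inv :: "bword \<Rightarrow> bword" where
  "word_inv w = rev (map letter_inv w)"

fun reduced :: "bword \<Rightarrow> bool" where
  "reduced [] = True"
| "reduced [a] = True"
| "reduced (a # b # w) = (b \<noteq> letter_inv a \<and> reduced (b # w))"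

definition cancel_snoc :: "bword \<Rightarrow> nat \<times> bool \<Rightarrow> bword" where
  "cancel_snoc acc a = (if acc \<noteq> [] \<and> last acc = letter_inv a then butlast acc else acc @ [a])"

definition reduce :: "bword \<Rightarrow> bword" where
  "reduce w = foldl cancel_snoc [] w"

lemma letter_inv_letter_inv [simp]: "letter_inv (letter_inv a) = a"
  by (simp add: letter_inv_def)

lemma letter_inv_eq_iff: "letter_inv a = b \<longleftrightarrow> a = letter_inv b"
  by (auto simp: letter_inv_def)

lemma letter_inv_Pair [simp]: "letter_inv (k, e) = (k, \<not> e)"
  by (simp add: letter_inv_def)

lemma word_inv_word_inv [simp]: "word_inv (word_inv w) = w"
  by (simp add: word_inv_def rev_map comp_def)

lemma word_inv_append [simp]: "word_inv (u @ v) = word_inv v @ word_inv u"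
  by (simp add: word_inv_def)

lemma word_inv_Cons [simp]: "word_inv (a # v) = word_inv v @ [letter_inv a]"
  by (simp add: word_inv_def)

lemma word_inv_Nil [simp]: "word_inv [] = []"
  by (simp add: word_inv_def)

lemma reduced_snoc:
  "reduced (xs @ [a]) \<longleftrightarrow> reduced xs \<and> (xs \<noteq> [] \<longrightarrow> last xs \<noteq> letter_inv a)"
  by (induction xs rule: reduced.induct) (auto simp: letter_inv_eq_iff)

lemma reduced_append:
  "reduced (xs @ ys) \<longleftrightarrow> reduced xs \<and> reduced ys \<and>
     (xs \<noteq> [] \<and> ys \<noteq> [] \<longrightarrow> hd ys \<noteq> letter_inv (last xs))"
proof (induction ys rule: rev_induct)
  case (snoc y ys)
  then show ?case
    by (cases "ys = []")
      (auto simp: reduced_snoc letter_inv_eq_iff simp flip: append_assoc simp del: append_assoc)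
qed simp

lemma reduced_cancel_snoc: "reduced acc \<Longrightarrow> reduced (cancel_snoc acc a)"
proof (cases acc rule: rev_cases)
  case (snoc p b)
  then show "reduced acc \<Longrightarrow> reduced (cancel_snoc acc a)"
    using reduced_snoc[of "p @ [b]" a] by (auto simp: cancel_snoc_def reduced_snoc)
qed (simp add: cancel_snoc_def)

lemma reduced_reduce [simp]: "reduced (reduce w)"
proof -
  have "reduced (foldl cancel_snoc acc w)" if "reduced acc" for acc
    using that by (induction w arbitrary: acc) (auto simp: reduced_cancel_snoc)
  then show ?thesis by (simp add: reduce_def)
qed

lemma foldl_cancel_snoc_reduced: "reduced (acc @ w) \<Longrightarrow> foldl cancel_snoc acc w = acc @ w"
proof (induction w arbitrary: acc)
  case (Cons a w)
  have "reduced ((acc @ [a]) @ w)" using Cons.prems by simp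
  moreover from this have "cancel_snoc acc a = acc @ [a]"
    by (auto simp: cancel_snoc_def reduced_append reduced_snoc)
  ultimately show ?case using Cons.IH by simp
qed simp

lemma reduce_reduced: "reduced w \<Longrightarrow> reduce w = w"
  using foldl_cancel_snoc_reduced[of "[]" w] by (simp add: reduce_def)

lemma reduce_reduce [simp]: "reduce (reduce w) = reduce w"
  by (simp add: reduce_reduced)

lemma reduce_append: "reduce (u @ v) = foldl cancel_snoc (reduce u) v"
  by (simp add: reduce_def)

lemma reduce_cancel: "reduce (u @ [a, letter_inv a] @ v) = reduce (u @ v)"
proof -
  have "cancel_snoc (cancel_snoc acc a) (letter_inv a) = acc" if "reduced acc" for acc
  proof (cases "acc \<noteq> [] \<and> last acc = letter_inv a")
    case True
    then obtain p where "acc = p @ [letter_inv a]" by (metis append_butlast_last_id)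
    then show ?thesis using \<open>reduced acc\<close> by (auto simp: cancel_snoc_def reduced_snoc)
  qed (auto simp: cancel_snoc_def)
  then show ?thesis by (simp add: reduce_append)
qed

lemma reduce_cancel_word_inv: "reduce (x @ y @ word_inv y @ z) = reduce (x @ z)"
proof (induction y arbitrary: x z)
  case (Cons a y)
  have "reduce (x @ (a # y) @ word_inv (a # y) @ z)
      = reduce ((x @ [a]) @ y @ word_inv y @ ([letter_inv a] @ z))" by simp
  also have "\<dots> = reduce (x @ [a, letter_inv a] @ z)" by (simp only: Cons.IH) simp
  finally show ?case by (simp only: reduce_cancel)
qed simp

lemma reduce_map_reduce:
  assumes cancel: "\<And>u a v. reduce (f (u @ [a, letter_inv a] @ v)) = reduce (f (u @ v))"
  shows "reduce (f (reduce z)) = reduce (f z)"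
proof -
  have "reduce (f (acc @ v)) = reduce (f (foldl cancel_snoc acc v))" for acc v
  proof (induction v arbitrary: acc)
    case (Cons a v)
    have "reduce (f (acc @ a # v)) = reduce (f (cancel_snoc acc a @ v))"
    proof (cases "acc \<noteq> [] \<and> last acc = letter_inv a")
      case True
      then obtain p where "acc = p @ [letter_inv a]" by (metis append_butlast_last_id)
      then show ?thesis
        using True cancel[of p "letter_inv a" v] by (simp add: cancel_snoc_def)
    next
      case False
      then show ?thesis by (auto simp: cancel_snoc_def)
    qed
    then show ?case using Cons.IH by simp
  qed simp
  from this[of "[]" z] show ?thesis by (simp add: reduce_def)
qed

lemma reduce_append_reduce_right: "reduce (u @ reduce v) = reduce (u @ v)"
  using reduce_map_reduce[of "\<lambda>z. u @ z" v] reduce_cancel[of "u @ _"] by simp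

lemma reduce_append_reduce_left: "reduce (reduce u @ v) = reduce (u @ v)"
  by (simp add: reduce_append)

lemma reduce_append_reduce: "reduce (reduce u @ reduce v) = reduce (u @ v)"
  by (simp add: reduce_append_reduce_left reduce_append_reduce_right)

lemma set_reduce: "set (reduce w) \<subseteq> set w"
proof -
  have "set (foldl cancel_snoc acc w) \<subseteq> set acc \<union> set w" for acc
  proof (induction w arbitrary: acc)
    case (Cons a w)
    have "set (cancel_snoc acc a) \<subseteq> set acc \<union> {a}"
      by (auto simp: cancel_snoc_def dest: in_set_butlastD)
    then show ?case using Cons.IH[of "cancel_snoc acc a"] by auto
  qed simp
  from this[of "[]"] show ?thesis by (simp add: reduce_def)
qed

text \<open>Words of the free group on \<open>x\<^sub>1, x\<^sub>2, \<dots>\<close> are encoded as \<open>bword\<close>s, the letter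
  \<open>(k, e)\<close> standing for \<open>x\<^sub>k\<^sup>\<plusminus>\<^sup>1\<close>. The Artin action lets \<open>\<sigma>\<^sub>i\<close> map \<open>x\<^sub>i \<mapsto> x\<^sub>i\<^sub>+\<^sub>1\<close> and
  \<open>x\<^sub>i\<^sub>+\<^sub>1 \<mapsto> x\<^sub>i\<^sub>+\<^sub>1 x\<^sub>i x\<^sub>i\<^sub>+\<^sub>1\<inverse>\<close>; the flag \<open>g = False\<close> gives the inverse automorphism.\<close>
definition artin_gen :: "nat \<Rightarrow> bool \<Rightarrow> nat \<Rightarrow> bword" where
  "artin_gen i g k =
    (if g then (if k = Suc i then [(Suc i, True), (i, True), (Suc i, False)]
                else if k = i then [(Suc i, True)] else [(k, True)])
     else (if k = Suc i then [(i, True)]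
           else if k = i then [(i, False), (Suc i, True), (i, True)] else [(k, True)]))"

definition artin_letter :: "nat \<Rightarrow> bool \<Rightarrow> nat \<times> bool \<Rightarrow> bword" where
  "artin_letter i g c = (if snd c then artin_gen i g (fst c) else word_inv (artin_gen i g (fst c)))"

definition artin_subst :: "nat \<Rightarrow> bool \<Rightarrow> bword \<Rightarrow> bword" where
  "artin_subst i g z = concat (map (artin_letter i g) z)"

fun artin_act :: "bword \<Rightarrow> bword \<Rightarrow> bword" where
  "artin_act [] z = z"
| "artin_act ((i, g) # u) z = artin_act u (artin_subst i g z)"

lemma artin_subst_append [simp]: "artin_subst i g (u @ v) = artin_subst i g u @ artin_subst i g v"
  by (simp add: artin_subst_def)

lemma artin_subst_Cons: "artin_subst i g (a # v) = artin_letter i g a @ artin_subst i g v"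
  by (simp add: artin_subst_def)

lemma artin_subst_Nil [simp]: "artin_subst i g [] = []"
  by (simp add: artin_subst_def)

lemma reduce_artin_subst_snoc:
  "reduce (artin_subst i g (w @ [a])) = foldl cancel_snoc (reduce (artin_subst i g w)) (artin_letter i g a)"
  by (simp add: reduce_append artin_subst_def)

lemma artin_letter_inv: "artin_letter i g (letter_inv c) = word_inv (artin_letter i g c)"
  by (cases c) (simp add: artin_letter_def)

lemma reduce_artin_subst_reduce: "reduce (artin_subst i g (reduce z)) = reduce (artin_subst i g z)"
  by (rule reduce_map_reduce) (simp add: artin_subst_Cons artin_letter_inv reduce_cancel_word_inv)

lemma reduce_artin_subst_cong:
  "reduce z1 = reduce z2 \<Longrightarrow> reduce (artin_subst i g z1) = reduce (artin_subst i g z2)"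
  by (metis reduce_artin_subst_reduce)

lemma artin_act_Cons: "artin_act (a # u) z = artin_act u (artin_subst (fst a) (snd a) z)"
  by (cases a) simp

declare artin_act.simps(2) [simp del]

lemma artin_act_append: "artin_act (u @ v) z = artin_act v (artin_act u z)"
  by (induction u arbitrary: z) (auto simp: artin_act_Cons)

lemma artin_act_concat: "artin_act u (x @ y) = artin_act u x @ artin_act u y"
  by (induction u arbitrary: x y) (auto simp: artin_act_Cons)

lemma artin_act_Nil: "artin_act u [] = []"
  by (induction u) (auto simp: artin_act_Cons)

lemma reduce_artin_act_cong: "reduce z1 = reduce z2 \<Longrightarrow> reduce (artin_act u z1) = reduce (artin_act u z2)"
proof (induction u arbitrary: z1 z2)
  case (Cons a u)
  then show ?case unfolding artin_act_Cons by (metis reduce_artin_subst_cong)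
qed simp

lemma reduce_artin_act_eqI:
  assumes "\<And>c. reduce (artin_act u [c]) = reduce (artin_act w [c])"
  shows "reduce (artin_act u z) = reduce (artin_act w z)"
proof (induction z)
  case (Cons c z)
  have "reduce (artin_act u (c # z)) = reduce (reduce (artin_act u [c]) @ reduce (artin_act u z))"
    using artin_act_concat[of u "[c]" z] by (simp add: reduce_append_reduce)
  also have "\<dots> = reduce (reduce (artin_act w [c]) @ reduce (artin_act w z))"
    by (simp only: Cons assms)
  also have "\<dots> = reduce (artin_act w (c # z))"
    using artin_act_concat[of w "[c]" z] by (simp add: reduce_append_reduce)
  finally show ?case .
qed (simp add: artin_act_Nil)

lemma reduce_artin_act_infix:
  assumes "\<And>z. reduce (artin_act m z) = reduce (artin_act m' z)"
  shows "reduce (artin_act (p @ m @ q) z) = reduce (artin_act (p @ m' @ q) z)"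
proof -
  have "reduce (artin_act q (artin_act m (artin_act p z))) = reduce (artin_act q (artin_act m' (artin_act p z)))"
    using assms by (rule reduce_artin_act_cong)
  then show ?thesis by (simp add: artin_act_append)
qed

lemma reduce_artin_act_cancel_pair: "reduce (artin_act [(i, e), (i, \<not> e)] z) = reduce z"
proof -
  have "reduce (artin_act [(i, e), (i, \<not> e)] [(k, h)]) = reduce (artin_act [] [(k, h)])" for k h
    by (cases e; cases h; cases "k = Suc i"; cases "k = i")
      (simp_all add: artin_act_Cons artin_subst_def artin_letter_def artin_gen_def reduce_def cancel_snoc_def)
  then have "reduce (artin_act [(i, e), (i, \<not> e)] z) = reduce (artin_act [] z)"
    by (metis reduce_artin_act_eqI surj_pair)
  then show ?thesis by simp
qed

lemma reduce_artin_act_far_comm: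
  assumes "i + 2 \<le> j"
  shows "reduce (artin_act [(i, e), (j, f)] z) = reduce (artin_act [(j, f), (i, e)] z)"
proof -
  have "reduce (artin_act [(i, e), (j, f)] [(k, h)]) = reduce (artin_act [(j, f), (i, e)] [(k, h)])" for k h
    using assms
    by (cases e; cases f; cases h; cases "k = Suc i"; cases "k = i"; cases "k = Suc j"; cases "k = j")
      (simp_all add: artin_act_Cons artin_subst_def artin_letter_def artin_gen_def reduce_def cancel_snoc_def)
  then show ?thesis by (metis reduce_artin_act_eqI surj_pair)
qed

lemma reduce_artin_act_braid_rel:
  "reduce (artin_act [(i, True), (Suc i, True), (i, True)] z)
     = reduce (artin_act [(Suc i, True), (i, True), (Suc i, True)] z)"
proof -
  have "reduce (artin_act [(i, True), (Suc i, True), (i, True)] [(k, h)])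
      = reduce (artin_act [(Suc i, True), (i, True), (Suc i, True)] [(k, h)])" for k h
    by (cases h; cases "k = Suc i"; cases "k = i"; cases "k = Suc (Suc i)")
      (simp_all add: artin_act_Cons artin_subst_def artin_letter_def artin_gen_def reduce_def cancel_snoc_def)
  then show ?thesis by (metis reduce_artin_act_eqI surj_pair)
qed

lemma reduce_artin_act_braid_step: "braid_step u w \<Longrightarrow> reduce (artin_act u z) = reduce (artin_act w z)"
proof (induction rule: braid_step.induct)
  case (free u i e v)
  show ?case
    using reduce_artin_act_infix[of "[(i, e), (i, \<not> e)]" "[]"] reduce_artin_act_cancel_pair by simp
next
  case (comm i j u e f v)
  then show ?case
    using reduce_artin_act_far_comm[of i j e f] reduce_artin_act_far_comm[of j i f e]
    by (intro reduce_artin_act_infix) auto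
next
  case (braid i j u v)
  then show ?case
    using reduce_artin_act_braid_rel[of i] reduce_artin_act_braid_rel[of j]
    by (intro reduce_artin_act_infix) auto
qed

lemma reduce_artin_act_braid_equiv:
  "(braid_move n)\<^sup>*\<^sup>* u w \<Longrightarrow> reduce (artin_act u z) = reduce (artin_act w z)"
proof (induction rule: rtranclp_induct)
  case (step y w)
  then show ?case
    using reduce_artin_act_braid_step[of y w z] reduce_artin_act_braid_step[of w y z]
    by (auto simp: braid_move_def)
qed simp

text \<open>The possible endings of the reduced word \<open>R = \<sigma>\<^sub>i(w)\<close>, for \<open>w\<close> freely reduced, according to
  the last letter of \<open>w\<close>; the clause for \<open>x\<^sub>i\<^sub>+\<^sub>1\<inverse>\<close> is Larue's observation that \<open>\<sigma>\<^sub>i\<close> preserves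
  a final \<open>x\<^sub>i\<^sub>+\<^sub>1\<inverse>\<close>.\<close>
definition sigma_tail :: "nat \<Rightarrow> bword \<Rightarrow> bword \<Rightarrow> bool" where
  "sigma_tail i w R \<longleftrightarrow> (w = [] \<longrightarrow> R = []) \<and>
   (w \<noteq> [] \<longrightarrow>
   (last w = (Suc i, True) \<longrightarrow> (\<exists>p. R = p @ [(i, True), (Suc i, False)])) \<and>
   (last w = (Suc i, False) \<longrightarrow> (\<exists>p. R = p @ [(i, False), (Suc i, False)])) \<and>
   (last w = (i, False) \<longrightarrow> (\<exists>p. R = p @ [(Suc i, False)] \<and> (p = [] \<or> fst (last p) \<noteq> i))) \<and>
   (last w = (i, True) \<longrightarrow> (\<exists>p x. R = p @ [x] \<and> x \<in> {(Suc i, True), (i, True), (i, False)})) \<and>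
   (fst (last w) \<noteq> i \<and> fst (last w) \<noteq> Suc i \<longrightarrow> (\<exists>p. R = p @ [last w])))"

lemma sigma_tail_snoc:
  assumes tail: "sigma_tail i w R" and red: "reduced (w @ [(k, f)])"
  shows "sigma_tail i (w @ [(k, f)]) (foldl cancel_snoc R (artin_letter i True (k, f)))"
proof (cases "w = []")
  case True
  then have "R = []" using tail by (simp add: sigma_tail_def)
  then show ?thesis using True
    by (cases f; cases "k = Suc i"; cases "k = i")
      (auto simp: sigma_tail_def artin_letter_def artin_gen_def cancel_snoc_def)
next
  case False
  obtain b e where b: "last w = (b, e)" by (cases "last w")
  have no_cancel: "(b, e) \<noteq> (k, \<not> f)" using red False b by (simp add: reduced_snoc)
  show ?thesis
    using tail False b no_cancel
    by (cases f; cases "k = Suc i"; cases "k = i"; cases e; cases "b = Suc i"; cases "b = i")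
      (auto simp: sigma_tail_def artin_letter_def artin_gen_def cancel_snoc_def butlast_append)
qed

lemma sigma_tail_reduce_artin_subst: "reduced w \<Longrightarrow> sigma_tail i w (reduce (artin_subst i True w))"
proof (induction w rule: rev_induct)
  case (snoc a w)
  then show ?case
    using sigma_tail_snoc[of i w _ "fst a" "snd a"]
    by (simp del: artin_subst_append add: reduce_artin_subst_snoc reduced_snoc)
qed (simp add: sigma_tail_def reduce_def)

lemma reduce_artin_subst_keeps_last_inverse:
  "reduced z \<Longrightarrow> z \<noteq> [] \<Longrightarrow> last z = (Suc i, False) \<Longrightarrow>
   reduce (artin_subst i True z) \<noteq> [] \<and> last (reduce (artin_subst i True z)) = (Suc i, False)"
  using sigma_tail_reduce_artin_subst[of z i] by (auto simp: sigma_tail_def)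

lemma artin_letter_fixes: "j < i \<Longrightarrow> fst c = Suc i \<Longrightarrow> artin_letter j g c = [c]"
  by (cases c) (auto simp: artin_letter_def artin_gen_def)

lemma artin_letter_avoids:
  "j < i \<Longrightarrow> fst c \<noteq> Suc i \<Longrightarrow> d \<in> set (artin_letter j g c) \<Longrightarrow> fst d \<noteq> Suc i"
  by (cases c) (auto simp: artin_letter_def artin_gen_def word_inv_def split: if_splits)

lemma reduce_artin_subst_inverse: "reduce (artin_subst j (\<not> g) (artin_subst j g z)) = reduce z"
  using reduce_artin_act_cancel_pair[of j g z] by (simp add: artin_act_Cons)

text \<open>For \<open>j < i\<close>, \<open>\<sigma>\<^sub>j\<^sup>\<plusminus>\<^sup>1\<close> fixes \<open>x\<^sub>i\<^sub>+\<^sub>1\<close> and restricts to an automorphism of the free group on the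
  other generators; in particular it never creates or destroys the letters \<open>x\<^sub>i\<^sub>+\<^sub>1\<^sup>\<plusminus>\<^sup>1\<close>.\<close>
lemma reduce_artin_subst_avoiding:
  assumes "j < i" "reduced v" "v \<noteq> []" "\<forall>c\<in>set v. fst c \<noteq> Suc i"
  shows "reduce (artin_subst j g v) \<noteq> [] \<and> (\<forall>d\<in>set (reduce (artin_subst j g v)). fst d \<noteq> Suc i)"
proof
  show "reduce (artin_subst j g v) \<noteq> []"
  proof
    assume "reduce (artin_subst j g v) = []"
    then have "reduce (artin_subst j (\<not> g) (reduce (artin_subst j g v))) = []"
      by (simp add: reduce_def)
    then have "reduce v = []" by (simp add: reduce_artin_subst_reduce reduce_artin_subst_inverse)
    then show False using assms(2,3) by (simp add: reduce_reduced)
  qed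
  have "\<forall>d\<in>set (artin_subst j g v). fst d \<noteq> Suc i"
    using assms(1,4) by (auto simp: artin_subst_def dest: artin_letter_avoids)
  then show "\<forall>d\<in>set (reduce (artin_subst j g v)). fst d \<noteq> Suc i"
    using set_reduce by blast
qed

lemma split_last_block:
  assumes "xs \<noteq> []" "\<not> P (last xs)"
  obtains ys zs where "xs = ys @ zs" "zs \<noteq> []" "\<forall>z\<in>set zs. \<not> P z" "ys \<noteq> [] \<Longrightarrow> P (last ys)"
proof
  show "xs = rev (dropWhile (\<lambda>z. \<not> P z) (rev xs)) @ rev (takeWhile (\<lambda>z. \<not> P z) (rev xs))"
    by (metis rev_append rev_rev_ident takeWhile_dropWhile_id)
  show "rev (takeWhile (\<lambda>z. \<not> P z) (rev xs)) \<noteq> []"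
    using assms by (cases "rev xs") auto
  show "\<forall>z\<in>set (rev (takeWhile (\<lambda>z. \<not> P z) (rev xs))). \<not> P z"
    by (auto dest: set_takeWhileD)
  show "P (last (rev (dropWhile (\<lambda>z. \<not> P z) (rev xs))))"
    if "rev (dropWhile (\<lambda>z. \<not> P z) (rev xs)) \<noteq> []"
    using that hd_dropWhile[of "\<lambda>z. \<not> P z" "rev xs"] by (simp add: last_rev)
qed

lemma reduce_artin_subst_snoc_fixed:
  assumes "j < i" "fst a = Suc i"
    and "reduce (artin_subst j g q) = [] \<or> last (reduce (artin_subst j g q)) \<noteq> letter_inv a"
  shows "reduce (artin_subst j g (q @ [a])) = reduce (artin_subst j g q) @ [a]"
  using assms artin_letter_fixes[OF assms(1,2)]
  by (auto simp del: artin_subst_append simp add: reduce_artin_subst_snoc cancel_snoc_def)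

lemma reduce_artin_subst_below:
  assumes "j < i" "reduced p"
  shows "(reduce (artin_subst j g p) = [] \<longleftrightarrow> p = []) \<and>
    (p \<noteq> [] \<longrightarrow> (fst (last p) = Suc i \<longrightarrow> last (reduce (artin_subst j g p)) = last p) \<and>
                  (fst (last p) \<noteq> Suc i \<longrightarrow> fst (last (reduce (artin_subst j g p))) \<noteq> Suc i))"
  using assms(2)
proof (induction "length p" arbitrary: p rule: less_induct)
  case less
  consider "p = []" | "p \<noteq> []" "fst (last p) = Suc i" | "p \<noteq> []" "fst (last p) \<noteq> Suc i"
    by blast
  then show ?case
  proof cases
    case 1
    then show ?thesis by (simp add: reduce_def)
  next
    case 2
    obtain q a where p: "p = q @ [a]" using 2 by (metis append_butlast_last_id)
    have a: "fst a = Suc i" using 2 p by simp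
    have "reduced q" and no_cancel: "q \<noteq> [] \<Longrightarrow> last q \<noteq> letter_inv a"
      using less.prems p by (auto simp: reduced_snoc)
    then have IH: "(reduce (artin_subst j g q) = [] \<longleftrightarrow> q = []) \<and>
      (q \<noteq> [] \<longrightarrow> (fst (last q) = Suc i \<longrightarrow> last (reduce (artin_subst j g q)) = last q) \<and>
        (fst (last q) \<noteq> Suc i \<longrightarrow> fst (last (reduce (artin_subst j g q))) \<noteq> Suc i))"
      using less.hyps[of q] p by simp
    have "fst (letter_inv a) = Suc i" using a by (simp add: letter_inv_def)
    then have "reduce (artin_subst j g q) = [] \<or> last (reduce (artin_subst j g q)) \<noteq> letter_inv a"
      using IH no_cancel by metis
    then show ?thesis using p reduce_artin_subst_snoc_fixed[OF assms(1) a] by simp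
  next
    case 3
    obtain q v where p: "p = q @ v" and v: "v \<noteq> []" "\<forall>c\<in>set v. fst c \<noteq> Suc i"
      and q_last: "q \<noteq> [] \<Longrightarrow> fst (last q) = Suc i"
      by (rule split_last_block[of p "\<lambda>c. fst c = Suc i", OF 3]) blast
    have "reduced q" "reduced v" using less.prems p reduced_append by blast+
    with v have V: "reduce (artin_subst j g v) \<noteq> []"
      "\<forall>d\<in>set (reduce (artin_subst j g v)). fst d \<noteq> Suc i"
      using reduce_artin_subst_avoiding[OF assms(1)] by blast+
    have "\<exists>r. reduce (artin_subst j g p) = r @ reduce (artin_subst j g v)"
    proof (cases "q = []")
      case True
      then show ?thesis using p by simp
    next
      case False
      have "length q < length p" using p v by simp
      then have Q: "reduce (artin_subst j g q) \<noteq> [] \<and> last (reduce (artin_subst j g q)) = last q"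
        using less.hyps \<open>reduced q\<close> False q_last by blast
      have "fst (hd (reduce (artin_subst j g v))) \<noteq> Suc i"
        using V by (simp add: hd_in_set)
      then have "reduced (reduce (artin_subst j g q) @ reduce (artin_subst j g v))"
        using Q q_last[OF False] by (auto simp: reduced_append letter_inv_def)
      then have "reduce (artin_subst j g p) = reduce (artin_subst j g q) @ reduce (artin_subst j g v)"
        using p reduce_append_reduce[of "artin_subst j g q" "artin_subst j g v"]
        by (simp add: reduce_reduced)
      then show ?thesis by blast
    qed
    then show ?thesis using V 3 by (auto simp: last_in_set)
  qed
qed

lemma reduce_artin_subst_below_keeps_last_inverse:
  assumes "j < i" "reduced z" "z \<noteq> []" "last z = (Suc i, False)"
  shows "reduce (artin_subst j g z) \<noteq> [] \<and> last (reduce (artin_subst j g z)) = (Suc i, False)"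
  using reduce_artin_subst_below[OF assms(1,2), of g] assms(3,4) by simp

lemma reduce_artin_act_keeps_last_inverse:
  "\<forall>c\<in>set u. fst c \<le> i \<and> c \<noteq> (i, False) \<Longrightarrow> reduced z \<Longrightarrow> z \<noteq> [] \<Longrightarrow> last z = (Suc i, False) \<Longrightarrow>
   reduce (artin_act u z) \<noteq> [] \<and> last (reduce (artin_act u z)) = (Suc i, False)"
proof (induction u arbitrary: z)
  case (Cons a u)
  obtain k g where a: "a = (k, g)" by (cases a)
  have k: "k \<le> i" "(k, g) \<noteq> (i, False)" using Cons.prems(1) a by auto
  define z' where "z' = reduce (artin_subst k g z)"
  have "z' \<noteq> [] \<and> last z' = (Suc i, False)"
  proof (cases "k = i")
    case True
    then show ?thesis using reduce_artin_subst_keeps_last_inverse[OF Cons.prems(2-4)] k unfolding z'_def by simp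
  next
    case False
    then show ?thesis
      using reduce_artin_subst_below_keeps_last_inverse[OF _ Cons.prems(2-4)] k unfolding z'_def by simp
  qed
  then have "reduce (artin_act u z') \<noteq> [] \<and> last (reduce (artin_act u z')) = (Suc i, False)"
    using Cons.IH[of z'] Cons.prems(1) unfolding z'_def by simp
  moreover have "reduce (artin_act u z') = reduce (artin_act u (artin_subst k g z))"
    unfolding z'_def by (rule reduce_artin_act_cong) simp
  ultimately show ?case using a by (simp add: artin_act_Cons)
qed (simp add: reduce_reduced)

lemma artin_act_fixes: "\<forall>c\<in>set u. fst c < i \<Longrightarrow> artin_act u [(Suc i, True)] = [(Suc i, True)]"
proof (induction u)
  case (Cons a u)
  then show ?case
    using artin_letter_fixes[of "fst a" i "(Suc i, True)" "snd a"]
    by (simp add: artin_act_Cons artin_subst_def)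
qed simp

text \<open>Property A of Dehornoy's ordering (Larue's proof): an \<open>i\<close>-positive braid word acts
  nontrivially on \<open>x\<^sub>i\<^sub>+\<^sub>1\<close>, since the reduced image ends with \<open>x\<^sub>i\<^sub>+\<^sub>1\<inverse>\<close>.\<close>
lemma i_positive_not_braid_trivial:
  assumes "i_positive i u"
  shows "\<not> (braid_move n)\<^sup>*\<^sup>* [] u"
proof
  assume trivial: "(braid_move n)\<^sup>*\<^sup>* [] u"
  have letters: "\<forall>c\<in>set u. fst c < Suc i" "(i, True) \<in> set u" "(i, False) \<notin> set u"
    using assms by (auto simp: i_positive_def gens_in_def)
  obtain ys zs where u: "u = ys @ (i, True) # zs" and "(i, True) \<notin> set ys"
    using split_list_first[OF letters(2)] by blast
  have ys: "\<forall>c\<in>set ys. fst c < i"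
  proof
    fix c assume "c \<in> set ys"
    then have "fst c < Suc i" "c \<noteq> (i, True)" "c \<noteq> (i, False)"
      using letters u \<open>(i, True) \<notin> set ys\<close> by auto
    then show "fst c < i" by (cases c) (auto simp: less_Suc_eq)
  qed
  have zs: "\<forall>c\<in>set zs. fst c \<le> i \<and> c \<noteq> (i, False)"
    using letters u by (auto simp: less_Suc_eq_le)
  have "artin_act u [(Suc i, True)] = artin_act zs [(Suc i, True), (i, True), (Suc i, False)]"
    using artin_act_fixes[OF ys] u
    by (simp add: artin_act_append artin_act_Cons artin_subst_def artin_letter_def artin_gen_def)
  then have "last (reduce (artin_act u [(Suc i, True)])) = (Suc i, False)"
    using reduce_artin_act_keeps_last_inverse[OF zs, of "[(Suc i, True), (i, True), (Suc i, False)]"]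
    by simp
  moreover have "reduce (artin_act [] [(Suc i, True)]) = reduce (artin_act u [(Suc i, True)])"
    using trivial by (rule reduce_artin_act_braid_equiv)
  ultimately show False by (simp add: reduce_reduced)
qed

lemma braid_move_sym: "braid_move n u w \<Longrightarrow> braid_move n w u"
  by (auto simp: braid_move_def)

lemma braid_equiv_sym: "(braid_move n)\<^sup>*\<^sup>* u w \<Longrightarrow> (braid_move n)\<^sup>*\<^sup>* w u"
  by (metis braid_move_sym symp_rtranclp sympD sympI)

lemma braid_equiv_gens_in: "(braid_move n)\<^sup>*\<^sup>* u w \<Longrightarrow> gens_in n u \<Longrightarrow> gens_in n w"
  by (induction rule: rtranclp_induct) (auto simp: braid_move_def)

lemma gens_in_word_inv: "gens_in n v \<Longrightarrow> gens_in n (word_inv v)"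
  by (auto simp: gens_in_def word_inv_def letter_inv_def)

lemma gens_in_append [simp]: "gens_in n (u @ v) \<longleftrightarrow> gens_in n u \<and> gens_in n v"
  by (auto simp: gens_in_def)

lemma gens_in_mono: "gens_in m v \<Longrightarrow> m \<le> n \<Longrightarrow> gens_in n v"
  by (auto simp: gens_in_def)

lemma braid_equiv_word_inv_cancel: "gens_in n v \<Longrightarrow> (braid_move n)\<^sup>*\<^sup>* (word_inv v @ v) []"
proof (induction v)
  case (Cons a v)
  obtain k f where a: "a = (k, f)" by (cases a)
  have v: "gens_in n v" using Cons.prems by (simp add: gens_in_def)
  have "braid_step (word_inv v @ [(k, \<not> f), (k, \<not> \<not> f)] @ v) (word_inv v @ v)"
    by (rule braid_step.free)
  then have "braid_move n (word_inv (a # v) @ a # v) (word_inv v @ v)"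
    using Cons.prems gens_in_word_inv[OF Cons.prems] gens_in_word_inv[OF v] v a
    by (auto simp: braid_move_def gens_in_def)
  then show ?case using Cons.IH[OF v] by (rule converse_rtranclp_into_rtranclp)
qed simp

lemma mem_braid_cls: "v \<in> braid_cls n w \<longleftrightarrow> gens_in n w \<and> (braid_move n)\<^sup>*\<^sup>* w v"
  by (simp add: braid_cls_def braid_rel_def)

lemma braid_cls_self: "gens_in n w \<Longrightarrow> w \<in> braid_cls n w"
  by (simp add: mem_braid_cls)

lemma braid_cls_eq:
  assumes "gens_in n w" "v \<in> braid_cls n w"
  shows "braid_cls n w = braid_cls n v"
proof -
  have wv: "(braid_move n)\<^sup>*\<^sup>* w v" using assms by (simp add: mem_braid_cls)
  then have "gens_in n v" using assms(1) by (rule braid_equiv_gens_in)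
  then show ?thesis
    using assms(1) wv braid_equiv_sym[OF wv] unfolding set_eq_iff mem_braid_cls
    by (meson rtranclp_trans)
qed

lemma braid_group_carrier_iff: "x \<in> carrier (braid_group n) \<longleftrightarrow> (\<exists>w. gens_in n w \<and> x = braid_cls n w)"
  by (auto simp: braid_group_def quotient_def braid_cls_def)

lemma braid_cls_in_carrier: "gens_in n w \<Longrightarrow> braid_cls n w \<in> carrier (braid_group n)"
  by (auto simp: braid_group_carrier_iff)

lemma braid_group_carrier_gens_in: "x \<in> carrier (braid_group n) \<Longrightarrow> v \<in> x \<Longrightarrow> gens_in n v"
  by (auto simp: braid_group_carrier_iff mem_braid_cls intro: braid_equiv_gens_in)

lemma braid_group_carrier_eq_cls: "x \<in> carrier (braid_group n) \<Longrightarrow> v \<in> x \<Longrightarrow> x = braid_cls n v"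
  by (auto simp: braid_group_carrier_iff dest: braid_cls_eq)

lemma braid_group_one: "\<one>\<^bsub>braid_group n\<^esub> = braid_cls n []"
  by (simp add: braid_group_def)

lemma append_in_braid_mult:
  assumes "x \<in> carrier (braid_group n)" "y \<in> carrier (braid_group n)" "a \<in> x" "b \<in> y"
  shows "a @ b \<in> x \<otimes>\<^bsub>braid_group n\<^esub> y"
proof -
  have "gens_in n (a @ b)" using assms braid_group_carrier_gens_in by (fastforce simp: gens_in_def)
  then show ?thesis using assms by (auto simp: braid_group_def mem_braid_cls)
qed

text \<open>That \<open>braid_group n\<close> is a group is taken as a hypothesis from here on; in the theorem it
  comes with the assumption \<open>N \<lhd> braid_group n\<close>.\<close>
lemma braid_group_inv_cls:
  assumes "group (braid_group n)" "gens_in n v"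
  shows "inv\<^bsub>braid_group n\<^esub> (braid_cls n v) = braid_cls n (word_inv v)"
proof -
  interpret G: group "braid_group n" by (rule assms(1))
  have v: "braid_cls n v \<in> carrier (braid_group n)"
    and v': "braid_cls n (word_inv v) \<in> carrier (braid_group n)"
    using assms(2) gens_in_word_inv by (auto intro: braid_cls_in_carrier)
  have w: "gens_in n (word_inv v @ v)" using assms(2) gens_in_word_inv by simp
  have "word_inv v @ v \<in> braid_cls n (word_inv v) \<otimes>\<^bsub>braid_group n\<^esub> braid_cls n v"
    using assms(2) gens_in_word_inv v v' by (auto intro!: append_in_braid_mult simp: mem_braid_cls)
  then have "braid_cls n (word_inv v) \<otimes>\<^bsub>braid_group n\<^esub> braid_cls n v = braid_cls n (word_inv v @ v)"
    using v v' by (simp add: braid_group_carrier_eq_cls)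
  also have "\<dots> = braid_cls n []"
    using w braid_equiv_word_inv_cancel[OF assms(2)] by (intro braid_cls_eq) (simp_all add: mem_braid_cls)
  finally have "braid_cls n (word_inv v) \<otimes>\<^bsub>braid_group n\<^esub> braid_cls n v = \<one>\<^bsub>braid_group n\<^esub>"
    by (simp add: braid_group_one)
  then show ?thesis using G.inv_equality v v' by blast
qed

lemma sub_braid_inv_closed:
  assumes "group (braid_group n)" "m \<le> n" "y \<in> sub_braid n m"
  shows "inv\<^bsub>braid_group n\<^esub> y \<in> sub_braid n m"
  using assms braid_group_inv_cls gens_in_word_inv gens_in_mono
  by (fastforce simp: sub_braid_def)

lemma i_positive_append_max:
  assumes "i_positive i a" "i_positive j b"
  shows "i_positive (max i j) (a @ b)"
proof (cases "i \<le> j")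
  case True
  have "(j, False) \<notin> set a"
  proof
    assume j: "(j, False) \<in> set a"
    then have "j < Suc i" using assms(1) by (auto simp: i_positive_def gens_in_def)
    then have "j = i" using True by simp
    then show False using j assms(1) by (simp add: i_positive_def)
  qed
  then show ?thesis using assms True by (auto simp: i_positive_def gens_in_def max_def)
next
  case False
  have "(i, False) \<notin> set b"
    using assms(2) False by (auto simp: i_positive_def gens_in_def)
  then show ?thesis using assms False by (auto simp: i_positive_def gens_in_def max_def)
qed

lemma i_positive_conj: "i_positive i w \<Longrightarrow> gens_in i v \<Longrightarrow> i_positive i (v @ w @ word_inv v)"
  using gens_in_word_inv[of i v] by (auto simp: i_positive_def gens_in_def)

lemma dehornoy_pos_mult:
  assumes "group (braid_group n)" "dehornoy_pos n x" "dehornoy_pos n y"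
  shows "dehornoy_pos n (x \<otimes>\<^bsub>braid_group n\<^esub> y)"
proof -
  interpret G: group "braid_group n" by (rule assms(1))
  obtain a i where a: "a \<in> x" "i \<ge> 1" "i_positive i a" and x: "x \<in> carrier (braid_group n)"
    using assms(2) by (auto simp: dehornoy_pos_def)
  obtain b j where b: "b \<in> y" "i_positive j b" and y: "y \<in> carrier (braid_group n)"
    using assms(3) by (auto simp: dehornoy_pos_def)
  have "a @ b \<in> x \<otimes>\<^bsub>braid_group n\<^esub> y" using x y a(1) b(1) by (rule append_in_braid_mult)
  moreover have "i_positive (max i j) (a @ b)" using a(3) b(2) by (rule i_positive_append_max)
  moreover have "max i j \<ge> 1" using a(2) by simp
  ultimately show ?thesis using x y unfolding dehornoy_pos_def by blast
qed

lemma not_dehornoy_pos_one: "\<not> dehornoy_pos n \<one>\<^bsub>braid_group n\<^esub>"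
  using i_positive_not_braid_trivial by (auto simp: dehornoy_pos_def braid_group_one mem_braid_cls)

lemma dehornoy_pos_outside_sub_braid:
  assumes "dehornoy_pos n x" "x \<notin> sub_braid n (n - 1)"
  obtains w where "w \<in> x" "i_positive (n - 1) w"
proof -
  obtain w i where w: "w \<in> x" "i \<ge> 1" "i_positive i w" and x: "x \<in> carrier (braid_group n)"
    using assms(1) by (auto simp: dehornoy_pos_def)
  have "i < n" using w(3) braid_group_carrier_gens_in[OF x w(1)] by (auto simp: i_positive_def gens_in_def)
  moreover have "i + 1 > n - 1"
  proof (rule ccontr)
    assume "\<not> i + 1 > n - 1"
    then have "gens_in (n - 1) w" using w(3) by (auto simp: i_positive_def gens_in_def)
    then show False using assms(2) braid_group_carrier_eq_cls[OF x w(1)] by (auto simp: sub_braid_def)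
  qed
  ultimately have "i = n - 1" by simp
  then show ?thesis using that w by blast
qed

text \<open>A positive braid outside \<open>B\<^sub>n\<^sub>-\<^sub>1\<close> is \<open>(n-1)\<close>-positive, and \<open>(n-1)\<close>-positivity of a word
  survives conjugation by words in \<open>\<sigma>\<^sub>1, \<dots>, \<sigma>\<^sub>n\<^sub>-\<^sub>2\<close>.\<close>
lemma dehornoy_pos_conj_sub_braid:
  assumes G: "group (braid_group n)" and x: "dehornoy_pos n x" "x \<notin> sub_braid n (n - 1)"
    and y: "y \<in> sub_braid n (n - 1)"
  shows "dehornoy_pos n (y \<otimes>\<^bsub>braid_group n\<^esub> x \<otimes>\<^bsub>braid_group n\<^esub> inv\<^bsub>braid_group n\<^esub> y)"
proof -
  interpret G: group "braid_group n" by (rule G)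
  obtain w where w: "w \<in> x" "i_positive (n - 1) w"
    using x by (rule dehornoy_pos_outside_sub_braid)
  obtain v where v: "gens_in (n - 1) v" and yv: "y = braid_cls n v"
    using y by (auto simp: sub_braid_def)
  have vn: "gens_in n v" "gens_in n (word_inv v)" using v gens_in_mono gens_in_word_inv by auto
  have xc: "x \<in> carrier (braid_group n)" using x by (simp add: dehornoy_pos_def)
  have yc: "y \<in> carrier (braid_group n)" "inv\<^bsub>braid_group n\<^esub> y = braid_cls n (word_inv v)"
    using yv vn braid_cls_in_carrier braid_group_inv_cls[OF G] by auto
  have "v @ w \<in> y \<otimes>\<^bsub>braid_group n\<^esub> x"
    using yc(1) xc _ w(1) by (rule append_in_braid_mult) (simp add: yv vn mem_braid_cls)
  then have "(v @ w) @ word_inv v \<in> y \<otimes>\<^bsub>braid_group n\<^esub> x \<otimes>\<^bsub>braid_group n\<^esub> inv\<^bsub>braid_group n\<^esub> y"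
    unfolding yc(2)
    by (rule append_in_braid_mult[OF G.m_closed[OF yc(1) xc] braid_cls_in_carrier[OF vn(2)] _
          braid_cls_self[OF vn(2)]])
  moreover have "i_positive (n - 1) ((v @ w) @ word_inv v)" using i_positive_conj[OF w(2) v] by simp
  moreover have "n - 1 \<ge> 1" using w(2) by (auto simp: i_positive_def gens_in_def)
  moreover have "y \<otimes>\<^bsub>braid_group n\<^esub> x \<otimes>\<^bsub>braid_group n\<^esub> inv\<^bsub>braid_group n\<^esub> y \<in> carrier (braid_group n)"
    using xc yc(1) by simp
  ultimately show ?thesis unfolding dehornoy_pos_def by blast
qed

lemma dehornoy_pos_conj_normal:
  assumes "N \<lhd> braid_group n" "N \<inter> sub_braid n (n - 1) = {\<one>\<^bsub>braid_group n\<^esub>}"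
    and "y \<in> sub_braid n (n - 1)" "x \<in> N" "dehornoy_pos n x"
  shows "dehornoy_pos n (y \<otimes>\<^bsub>braid_group n\<^esub> x \<otimes>\<^bsub>braid_group n\<^esub> inv\<^bsub>braid_group n\<^esub> y)"
proof (rule dehornoy_pos_conj_sub_braid)
  show "group (braid_group n)" using assms(1) by (simp add: normal_def)
  show "x \<notin> sub_braid n (n - 1)"
  proof
    assume "x \<in> sub_braid n (n - 1)"
    then have "x = \<one>\<^bsub>braid_group n\<^esub>" using assms(2,4) by blast
    then show False using assms(5) not_dehornoy_pos_one by simp
  qed
qed (use assms in simp_all)

lemma (in group) least_positive_commutes:
  assumes cone: "P \<subseteq> carrier G" "\<one> \<notin> P" "\<And>x z. x \<in> P \<Longrightarrow> z \<in> P \<Longrightarrow> x \<otimes> z \<in> P"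
    and N: "N \<lhd> G" and y: "y \<in> carrier G"
    and conj: "\<And>x. x \<in> N \<inter> P \<Longrightarrow> y \<otimes> x \<otimes> inv y \<in> P"
      "\<And>x. x \<in> N \<inter> P \<Longrightarrow> inv y \<otimes> x \<otimes> y \<in> P"
    and least: "p \<in> N \<inter> P" "\<And>q. q \<in> N \<inter> P \<Longrightarrow> q = p \<or> inv p \<otimes> q \<in> P"
  shows "p \<otimes> y = y \<otimes> p"
proof -
  interpret N: normal N G by (rule N)
  define q where "q = y \<otimes> p \<otimes> inv y"
  define r where "r = inv y \<otimes> p \<otimes> y"
  have p: "p \<in> carrier G" using least(1) cone(1) by blast
  have "q = p"
  proof (rule ccontr)
    assume "q \<noteq> p"
    have q: "q \<in> N \<inter> P" unfolding q_def using conj(1) least(1) N.inv_op_closed2 y by blast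
    then have pq: "inv p \<otimes> q \<in> P" using least(2) \<open>q \<noteq> p\<close> by blast
    have "y \<otimes> r \<otimes> inv y = p" unfolding r_def using p y by (simp add: m_assoc) (simp add: m_assoc [symmetric])
    then have "r \<noteq> p" using \<open>q \<noteq> p\<close> q_def by auto
    moreover have "r \<in> N \<inter> P" unfolding r_def using conj(2) least(1) N.inv_op_closed2[of "inv y"] y by auto
    ultimately have "inv p \<otimes> r \<in> N \<inter> P" using least N.m_inv_closed N.m_closed by blast
    then have "y \<otimes> (inv p \<otimes> r) \<otimes> inv y \<in> P" by (rule conj(1))
    also have "y \<otimes> (inv p \<otimes> r) \<otimes> inv y = inv q \<otimes> p"
      unfolding q_def r_def using p y by (simp add: m_assoc inv_mult_group)
    finally have "(inv q \<otimes> p) \<otimes> (inv p \<otimes> q) \<in> P" using pq cone(3) by blast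
    moreover have "(inv q \<otimes> p) \<otimes> (inv p \<otimes> q) = \<one>"
      using p q cone(1) by (simp add: m_assoc[symmetric]) (simp add: m_assoc)
    ultimately show False using cone(2) by simp
  qed
  then show ?thesis using inv_solve_right[of p "y \<otimes> p" y] p y by (simp add: q_def)
qed

theorem lemma2p1:
  fixes n :: nat and N :: "bword set set" and p :: "bword set"
  assumes "n \<ge> 3"
    and "N \<lhd> braid_group n"
    and "N \<noteq> {\<one>\<^bsub>braid_group n\<^esub>}"
    and "N \<inter> sub_braid n (n - 1) = {\<one>\<^bsub>braid_group n\<^esub>}"
    and "p \<in> N" and "dehornoy_pos n p"
    and "\<forall>q \<in> N. dehornoy_pos n q \<longrightarrow> dehornoy_le n p q"
  shows "p \<in> C_cent n"
proof -
  have G: "group (braid_group n)" using assms(2) by (simp add: normal_def)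
  interpret G: group "braid_group n" by (rule G)
  have "p \<otimes>\<^bsub>braid_group n\<^esub> y = y \<otimes>\<^bsub>braid_group n\<^esub> p" if y: "y \<in> sub_braid n (n - 1)" for y
  proof (rule G.least_positive_commutes[where P = "Collect (dehornoy_pos n)" and N = N])
    show "y \<in> carrier (braid_group n)"
      using y by (auto simp: sub_braid_def intro!: braid_cls_in_carrier elim!: gens_in_mono)
    then show "inv\<^bsub>braid_group n\<^esub> y \<otimes>\<^bsub>braid_group n\<^esub> x \<otimes>\<^bsub>braid_group n\<^esub> y \<in> Collect (dehornoy_pos n)"
      if "x \<in> N \<inter> Collect (dehornoy_pos n)" for x
      using that dehornoy_pos_conj_normal[OF assms(2,4) sub_braid_inv_closed[OF G _ y]] by simp
    show "q = p \<or> inv\<^bsub>braid_group n\<^esub> p \<otimes>\<^bsub>braid_group n\<^esub> q \<in> Collect (dehornoy_pos n)"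
      if "q \<in> N \<inter> Collect (dehornoy_pos n)" for q
      using that assms(7) by (auto simp: dehornoy_le_def dehornoy_less_def)
    show "Collect (dehornoy_pos n) \<subseteq> carrier (braid_group n)" by (auto simp: dehornoy_pos_def)
    show "\<one>\<^bsub>braid_group n\<^esub> \<notin> Collect (dehornoy_pos n)" using not_dehornoy_pos_one by simp
    show "x \<otimes>\<^bsub>braid_group n\<^esub> z \<in> Collect (dehornoy_pos n)"
      if "x \<in> Collect (dehornoy_pos n)" "z \<in> Collect (dehornoy_pos n)" for x z
      using that dehornoy_pos_mult[OF G] by simp
    show "y \<otimes>\<^bsub>braid_group n\<^esub> x \<otimes>\<^bsub>braid_group n\<^esub> inv\<^bsub>braid_group n\<^esub> y \<in> Collect (dehornoy_pos n)"
      if "x \<in> N \<inter> Collect (dehornoy_pos n)" for x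
      using that dehornoy_pos_conj_normal[OF assms(2,4) y] by simp
  qed (use assms in simp_all)
  then show ?thesis using assms(6) by (simp add: C_cent_def dehornoy_pos_def)
qed

end
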